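(* Let $\mathbf G$ be a group such that $\mathcal G^\pm(\mathbf G)\cong\mathcal G^\pm(\mathbb Q)$, where $\mathbb Q$ denotes the additive group $(\mathbb Q,+)$. Then $\mathbf G\cong(\mathbb Q,+)$.
   Context: For a group $\mathbf G$, the $Z^\pm$-power graph $\mathcal G^\pm(\mathbf G)$ is the simple graph with vertex set $G$ in which distinct $x,y$ are adjacent iff $y=x^n$ or $x=y^n$ for some $n\in\mathbb Z\setminus\{0\}$ (in additive notation: $y=nx$ or $x=ny$). *)

theory Defs
  imports Complex_Main "HOL-Algebra.Group"
begin

definition pm_power_adj :: "('a, 'b) monoid_scheme \<Rightarrow> 'a \<Rightarrow> 'a \<Rightarrow> bool" where
  "pm_power_adj G x y \<longleftrightarrow> x \<in> carrier G \<and> y \<in> carrier G \<and> x \<noteq> y \<and>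
     ((\<exists>n::int. n \<noteq> 0 \<and> y = x [^]\<^bsub>G\<^esub> n) \<or> (\<exists>n::int. n \<noteq> 0 \<and> x = y [^]\<^bsub>G\<^esub> n))"

definition graph_iso :: "'a set \<Rightarrow> ('a \<Rightarrow> 'a \<Rightarrow> bool) \<Rightarrow> 'c set \<Rightarrow> ('c \<Rightarrow> 'c \<Rightarrow> bool) \<Rightarrow> bool" where
  "graph_iso V E W F \<longleftrightarrow> (\<exists>f. bij_betw f V W \<and> (\<forall>x\<in>V. \<forall>y\<in>V. E x y \<longleftrightarrow> F (f x) (f y)))"

definition pm_power_graph_iso :: "('a, 'b) monoid_scheme \<Rightarrow> ('c, 'd) monoid_scheme \<Rightarrow> bool" where
  "pm_power_graph_iso G H \<longleftrightarrow> graph_iso (carrier G) (pm_power_adj G) (carrier H) (pm_power_adj H)"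

definition rat_add_group :: "rat monoid" where
  "rat_add_group = \<lparr>carrier = UNIV, mult = (+), one = 0\<rparr>"

end

theory Submission
  imports Defs "HOL-Computational_Algebra.Primes"
begin

text \<open>
  A non-identity element \<open>x\<close> is adjacent to \<open>x\<^sup>2\<close>, so the only possible isolated vertex of a power
  graph is the identity, and it is isolated exactly when the group is torsion-free; since \<open>0\<close> is
  isolated in the graph of \<open>\<rat>\<close>, \<open>G\<close> is torsion-free. In a torsion-free group, the pairs \<open>(x\<^sup>p, x)\<close>
  with \<open>p\<close> prime, and the existence of \<open>p\<close>-th roots, are described by purely graph-theoretic
  conditions; as \<open>\<rat>\<close> is divisible, so is \<open>G\<close>. For distinct non-adjacent \<open>x = z\<^sup>i\<close>, \<open>y = z\<^sup>j\<close> the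
  three elements \<open>z^(\<plusminus>gcd i j)\<close>, \<open>z^(lcm i j)\<close> are common neighbours adjacent to all
  other common neighbours, while two elements of a torsion-free group not lying in a common
  cyclic subgroup have at most two such; as \<open>\<rat>\<close> is locally cyclic, so is \<open>G\<close>. Finally, a
  nontrivial torsion-free, divisible, locally cyclic group is isomorphic to \<open>\<rat>\<close> via
  \<open>a/b \<mapsto> (\<root>b g)\<^sup>a\<close> for any fixed \<open>g \<noteq> 1\<close>.
\<close>

lemma ex_prime_gt: "\<exists>r::int. prime r \<and> r > B"
proof -
  obtain p :: nat where "prime p" "p > nat B" using bigger_prime by blast
  thus ?thesis by (intro exI[of _ "int p"]) auto
qed

lemma infinite_primes_gt: "infinite {r::int. prime r \<and> r > B}"
proof
  assume fin: "finite {r::int. prime r \<and> r > B}"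
  obtain r :: int where "prime r" "r > Max (insert B {r. prime r \<and> r > B})"
    using ex_prime_gt by blast
  moreover have "r \<le> Max (insert B {r::int. prime r \<and> r > B})"
    using fin calculation by (intro Max_ge) auto
  ultimately show False by simp
qed

lemma prime_int_divisor_abs: "prime (r::int) \<Longrightarrow> d dvd r \<Longrightarrow> \<bar>d\<bar> = 1 \<or> \<bar>d\<bar> = r"
  by (metis abs_dvd_iff abs_ge_zero prime_int_iff zabs_def prime_gt_0_int less_imp_le abs_of_nonneg)

lemma prime_not_dvd_small:
  fixes r m :: int
  assumes "prime r" "\<bar>m\<bar> \<ge> 2" "\<bar>m\<bar> < r"
  shows "\<not> r dvd m \<and> \<not> m dvd r"
proof -
  have "m \<noteq> 0" using assms(2) by auto
  hence "\<not> r dvd m" using dvd_imp_le_int[of m r] assms by auto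
  moreover have "\<not> m dvd r" using prime_int_divisor_abs[OF assms(1), of m] assms by auto
  ultimately show ?thesis ..
qed

lemma prime_int_product_abs: "prime (i * l :: int) \<Longrightarrow> \<bar>i\<bar> = 1 \<or> \<bar>l\<bar> = 1"
  using prime_elem_multD[of i l] unfolding prime_def by (auto simp: zdvd1_eq)

lemma dvd_prime_square: "prime \<bar>n::int\<bar> \<Longrightarrow> j dvd n * n \<Longrightarrow> j dvd n \<or> n dvd j"
proof -
  assume p: "prime \<bar>n\<bar>" and d: "j dvd n * n"
  show ?thesis
  proof (cases "n dvd j")
    case False
    hence "\<not> \<bar>n\<bar> dvd j" by simp
    hence "coprime \<bar>n\<bar> j" using p prime_imp_coprime by blast
    hence "coprime j n" by (simp add: coprime_commute)
    thus ?thesis using d coprime_dvd_mult_left_iff by blast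
  qed simp
qed

lemma nonprime_int_factor:
  fixes n :: int
  assumes "\<bar>n\<bar> \<ge> 2" and "\<not> prime \<bar>n\<bar>"
  obtains s t where "n = s * t" "s \<ge> 2" "\<bar>t\<bar> \<ge> 2"
proof -
  have "\<not> (\<forall>m. m \<ge> 0 \<and> m dvd \<bar>n\<bar> \<longrightarrow> m = 1 \<or> m = \<bar>n\<bar>)"
    using assms prime_int_iff[of "\<bar>n\<bar>"] by auto
  then obtain s where s: "s \<ge> 0" "s dvd n" "s \<noteq> 1" "s \<noteq> \<bar>n\<bar>" by auto
  then obtain t where t: "n = s * t" by blast
  have "s \<noteq> 0" "t \<noteq> 0" "\<bar>t\<bar> \<noteq> 1" using s t assms(1) by (auto simp: abs_mult)
  hence "s \<ge> 2" "\<bar>t\<bar> \<ge> 2" using s(1,3) by auto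
  thus ?thesis using that[OF t] by blast
qed

section \<open>Graph-theoretic notions\<close>

definition closed_twins :: "'a set \<Rightarrow> ('a \<Rightarrow> 'a \<Rightarrow> bool) \<Rightarrow> 'a \<Rightarrow> 'a \<Rightarrow> bool" where
  "closed_twins V E u v \<longleftrightarrow> (\<forall>d\<in>V. (d = u \<or> E d u) \<longleftrightarrow> (d = v \<or> E d v))"

definition nbhd_covered :: "'a set \<Rightarrow> ('a \<Rightarrow> 'a \<Rightarrow> bool) \<Rightarrow> 'a \<Rightarrow> 'a \<Rightarrow> 'a \<Rightarrow> bool" where
  "nbhd_covered V E c a b \<longleftrightarrow> (\<forall>d\<in>V. E d c \<longrightarrow> d = a \<or> d = b \<or> E d a \<or> E d b)"

text \<open>In a torsion-free group the covering clause rules out common roots of \<open>x\<^sup>n\<close> and \<open>x\<close>, and the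
  finiteness clause rules out proper powers of \<open>x\<^sup>n\<close>; what remains between \<open>x\<^sup>n\<close> and \<open>x\<close> are the
  \<open>x\<^sup>s\<close> with \<open>s\<close> a proper divisor of \<open>n\<close>. So the prime edges are the pairs \<open>(x\<^sup>p, x)\<close>, \<open>p\<close> prime.\<close>

definition between :: "'a set \<Rightarrow> ('a \<Rightarrow> 'a \<Rightarrow> bool) \<Rightarrow> 'a \<Rightarrow> 'a \<Rightarrow> 'a \<Rightarrow> bool" where
  "between V E c a b \<longleftrightarrow> E c a \<and> E c b \<and> \<not> closed_twins V E c a \<and> \<not> closed_twins V E c b \<and>
     nbhd_covered V E c a b \<and> finite {d\<in>V. E d a \<and> E d b \<and> d \<noteq> c \<and> \<not> E d c}"

definition prime_edge :: "'a set \<Rightarrow> ('a \<Rightarrow> 'a \<Rightarrow> bool) \<Rightarrow> 'a \<Rightarrow> 'a \<Rightarrow> bool" where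
  "prime_edge V E a b \<longleftrightarrow> E a b \<and> \<not> closed_twins V E a b \<and> \<not> (\<exists>c\<in>V. between V E c a b)"

text \<open>The path \<open>a, x, a'\<close> behaves like \<open>y\<^sup>p\<^sup>p, y\<^sup>p, y\<close>; for \<open>a = x\<^sup>p\<close> in a torsion-free group
  this forces \<open>x\<close> to have a \<open>p\<close>-th root.\<close>

definition root_chain :: "'a set \<Rightarrow> ('a \<Rightarrow> 'a \<Rightarrow> bool) \<Rightarrow> 'a \<Rightarrow> 'a \<Rightarrow> bool" where
  "root_chain V E x a \<longleftrightarrow> (\<exists>a'\<in>V. E a' x \<and> E a' a \<and> \<not> closed_twins V E a' x \<and>
     nbhd_covered V E x a a' \<and> (\<forall>c\<in>V. E c a \<and> E c a' \<longrightarrow> c = x \<or> E c x))"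

definition dominating_common_nbr :: "'a set \<Rightarrow> ('a \<Rightarrow> 'a \<Rightarrow> bool) \<Rightarrow> 'a \<Rightarrow> 'a \<Rightarrow> 'a \<Rightarrow> bool" where
  "dominating_common_nbr V E x y u \<longleftrightarrow>
     E u x \<and> E u y \<and> (\<forall>z\<in>V. E z x \<and> E z y \<and> z \<noteq> u \<longrightarrow> E u z)"

definition has_three_dominating_common_nbrs ::
    "'a set \<Rightarrow> ('a \<Rightarrow> 'a \<Rightarrow> bool) \<Rightarrow> 'a \<Rightarrow> 'a \<Rightarrow> bool" where
  "has_three_dominating_common_nbrs V E x y \<longleftrightarrow> (\<exists>u1\<in>V. \<exists>u2\<in>V. \<exists>u3\<in>V.
     u1 \<noteq> u2 \<and> u1 \<noteq> u3 \<and> u2 \<noteq> u3 \<and> dominating_common_nbr V E x y u1 \<and>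
     dominating_common_nbr V E x y u2 \<and> dominating_common_nbr V E x y u3)"

lemma closed_twins_sym: "closed_twins V E u v \<longleftrightarrow> closed_twins V E v u"
  unfolding closed_twins_def by blast

lemma nbhd_covered_sym: "nbhd_covered V E c a b \<longleftrightarrow> nbhd_covered V E c b a"
  unfolding nbhd_covered_def by blast

lemma prime_edge_sym:
  assumes "\<And>x y. E x y \<longleftrightarrow> E y x"
  shows "prime_edge V E a b \<longleftrightarrow> prime_edge V E b a"
proof -
  have "{d\<in>V. E d a \<and> E d b \<and> d \<noteq> c \<and> \<not> E d c} = {d\<in>V. E d b \<and> E d a \<and> d \<noteq> c \<and> \<not> E d c}"
    for c by blast
  hence "between V E c a b \<longleftrightarrow> between V E c b a" for c
    unfolding between_def using nbhd_covered_sym[of V E c a b] by metis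
  thus ?thesis unfolding prime_edge_def using assms closed_twins_sym[of V E a b] by metis
qed

locale graph_isomorphism =
  fixes V :: "'a set" and E :: "'a \<Rightarrow> 'a \<Rightarrow> bool" and W :: "'b set" and F :: "'b \<Rightarrow> 'b \<Rightarrow> bool"
    and f :: "'a \<Rightarrow> 'b"
  assumes bij: "bij_betw f V W"
    and adj_iff: "\<And>x y. x \<in> V \<Longrightarrow> y \<in> V \<Longrightarrow> E x y \<longleftrightarrow> F (f x) (f y)"
begin

lemma image_eq: "f ` V = W"
  using bij by (simp add: bij_betw_def)

lemma eq_iff: "x \<in> V \<Longrightarrow> y \<in> V \<Longrightarrow> f x = f y \<longleftrightarrow> x = y"
  using bij by (auto simp: bij_betw_def inj_on_def)

lemma preimage_exists: "w \<in> W \<Longrightarrow> \<exists>v\<in>V. f v = w"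
  using image_eq by blast

lemma Ball_image: "(\<forall>d\<in>W. P d) \<longleftrightarrow> (\<forall>d\<in>V. P (f d))"
  using image_eq by blast

lemma Bex_image: "(\<exists>d\<in>W. P d) \<longleftrightarrow> (\<exists>d\<in>V. P (f d))"
  using image_eq by blast

lemma closed_twins_image:
  "u \<in> V \<Longrightarrow> v \<in> V \<Longrightarrow> closed_twins W F (f u) (f v) \<longleftrightarrow> closed_twins V E u v"
  unfolding closed_twins_def Ball_image using adj_iff eq_iff by (smt (verit))

lemma nbhd_covered_image: "c \<in> V \<Longrightarrow> a \<in> V \<Longrightarrow> b \<in> V \<Longrightarrow>
    nbhd_covered W F (f c) (f a) (f b) \<longleftrightarrow> nbhd_covered V E c a b"
  unfolding nbhd_covered_def Ball_image using adj_iff eq_iff by (smt (verit))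

lemma between_image:
  assumes "c \<in> V" "a \<in> V" "b \<in> V"
  shows "between W F (f c) (f a) (f b) \<longleftrightarrow> between V E c a b"
proof -
  have eq: "{d\<in>W. F d (f a) \<and> F d (f b) \<and> d \<noteq> f c \<and> \<not> F d (f c)} =
      f ` {d\<in>V. E d a \<and> E d b \<and> d \<noteq> c \<and> \<not> E d c}"
    using assms adj_iff eq_iff image_eq by auto
  have "inj_on f {d\<in>V. E d a \<and> E d b \<and> d \<noteq> c \<and> \<not> E d c}"
    using bij by (auto simp: bij_betw_def inj_on_def)
  hence "finite {d\<in>W. F d (f a) \<and> F d (f b) \<and> d \<noteq> f c \<and> \<not> F d (f c)} \<longleftrightarrow>
      finite {d\<in>V. E d a \<and> E d b \<and> d \<noteq> c \<and> \<not> E d c}"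
    unfolding eq by (rule finite_image_iff)
  thus ?thesis
    unfolding between_def using assms adj_iff closed_twins_image nbhd_covered_image by simp
qed

lemma prime_edge_image:
  "a \<in> V \<Longrightarrow> b \<in> V \<Longrightarrow> prime_edge W F (f a) (f b) \<longleftrightarrow> prime_edge V E a b"
  unfolding prime_edge_def Bex_image using adj_iff closed_twins_image between_image by simp

lemma root_chain_image:
  "x \<in> V \<Longrightarrow> a \<in> V \<Longrightarrow> root_chain W F (f x) (f a) \<longleftrightarrow> root_chain V E x a"
  unfolding root_chain_def Bex_image Ball_image
  using adj_iff closed_twins_image nbhd_covered_image eq_iff by (smt (verit))

lemma dominating_common_nbr_image: "x \<in> V \<Longrightarrow> y \<in> V \<Longrightarrow> u \<in> V \<Longrightarrow>
    dominating_common_nbr W F (f x) (f y) (f u) \<longleftrightarrow> dominating_common_nbr V E x y u"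
  unfolding dominating_common_nbr_def Ball_image using adj_iff eq_iff by (smt (verit))

lemma has_three_dominating_common_nbrs_image: "x \<in> V \<Longrightarrow> y \<in> V \<Longrightarrow>
    has_three_dominating_common_nbrs W F (f x) (f y) \<longleftrightarrow> has_three_dominating_common_nbrs V E x y"
  unfolding has_three_dominating_common_nbrs_def Bex_image
  using dominating_common_nbr_image eq_iff by (smt (verit))

end

lemma pm_power_adj_sym: "pm_power_adj G x y \<longleftrightarrow> pm_power_adj G y x"
  unfolding pm_power_adj_def by blast

lemma pm_power_adj_carrier: "pm_power_adj G x y \<Longrightarrow> x \<in> carrier G \<and> y \<in> carrier G"
  unfolding pm_power_adj_def by blast

lemma pm_power_adj_cases:
  "pm_power_adj G a b \<Longrightarrow>
    (\<exists>n::int. n \<noteq> 0 \<and> b = a [^]\<^bsub>G\<^esub> n) \<or> (\<exists>n::int. n \<noteq> 0 \<and> a = b [^]\<^bsub>G\<^esub> n)"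
  unfolding pm_power_adj_def by blast

context group
begin

lemma pm_power_adj_int_pow:
  "a \<in> carrier G \<Longrightarrow> (n::int) \<noteq> 0 \<Longrightarrow> a [^] n \<noteq> a \<Longrightarrow> pm_power_adj G a (a [^] n)"
  unfolding pm_power_adj_def by auto

lemma eq_or_pm_power_adj_int_pow:
  "a \<in> carrier G \<Longrightarrow> (n::int) \<noteq> 0 \<Longrightarrow> a = a [^] n \<or> pm_power_adj G a (a [^] n)"
  using pm_power_adj_int_pow[of a n] by argo

lemma pm_power_adj_square:
  assumes "x \<in> carrier G" "x \<noteq> \<one>"
  shows "pm_power_adj G x (x [^] (2::int))"
proof (rule pm_power_adj_int_pow)
  have "x [^] (2::int) = x \<otimes> x" using int_pow_mult[OF assms(1), of 1 1] assms(1) by simp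
  thus "x [^] (2::int) \<noteq> x" using assms by simp
qed (use assms(1) in auto)

lemma int_pow_inv_exponent:
  assumes a: "a \<in> carrier G"
  shows "(\<exists>n::int. n \<noteq> 0 \<and> d = inv a [^] n) \<longleftrightarrow> (\<exists>n::int. n \<noteq> 0 \<and> d = a [^] n)"
    and "d \<in> carrier G \<Longrightarrow>
      (\<exists>n::int. n \<noteq> 0 \<and> inv a = d [^] n) \<longleftrightarrow> (\<exists>n::int. n \<noteq> 0 \<and> a = d [^] n)"
proof -
  have uminus: "(\<exists>n::int. n \<noteq> 0 \<and> P (- n)) \<longleftrightarrow> (\<exists>n::int. n \<noteq> 0 \<and> P n)" for P
    by (metis minus_minus neg_equal_0_iff_equal)
  have "inv a [^] n = a [^] (- n)" for n :: int
    using a by (simp add: int_pow_inv int_pow_neg)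
  thus "(\<exists>n::int. n \<noteq> 0 \<and> d = inv a [^] n) \<longleftrightarrow> (\<exists>n::int. n \<noteq> 0 \<and> d = a [^] n)"
    using uminus[of "\<lambda>n. d = a [^] n"] by simp
  assume d: "d \<in> carrier G"
  have "inv a = d [^] n \<longleftrightarrow> a = d [^] (- n)" for n :: int
    using a d by (metis inv_inv int_pow_closed int_pow_neg)
  thus "(\<exists>n::int. n \<noteq> 0 \<and> inv a = d [^] n) \<longleftrightarrow> (\<exists>n::int. n \<noteq> 0 \<and> a = d [^] n)"
    using uminus[of "\<lambda>n. a = d [^] n"] by simp
qed

lemma closed_twins_inv:
  assumes x: "x \<in> carrier G"
  shows "closed_twins (carrier G) (pm_power_adj G) x (inv x)"
proof (cases "x = inv x")
  case False
  have "pm_power_adj G x (inv x)"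
    using pm_power_adj_int_pow[OF x, of "-1"] False x by (simp add: int_pow_neg)
  moreover have "pm_power_adj G d x \<longleftrightarrow> pm_power_adj G d (inv x)"
    if "d \<in> carrier G" "d \<noteq> x" "d \<noteq> inv x" for d
    using that x int_pow_inv_exponent[OF x, of d] unfolding pm_power_adj_def by auto
  ultimately show ?thesis unfolding closed_twins_def using pm_power_adj_sym by metis
qed (simp add: closed_twins_def)

lemma nbhd_covered_int_pow_chain:
  fixes k l :: int
  assumes y: "y \<in> carrier G" and "k \<noteq> 0" "l \<noteq> 0"
  shows "nbhd_covered (carrier G) (pm_power_adj G) (y [^] k) (y [^] (k * l)) y"
  unfolding nbhd_covered_def
proof (intro ballI impI)
  fix d assume d: "d \<in> carrier G" and "pm_power_adj G d (y [^] k)"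
  from pm_power_adj_cases[OF this(2)]
  show "d = y [^] (k * l) \<or> d = y \<or> pm_power_adj G d (y [^] (k * l)) \<or> pm_power_adj G d y"
  proof (elim disjE exE conjE)
    fix m :: int assume "m \<noteq> 0" "y [^] k = d [^] m"
    hence "y [^] (k * l) = d [^] (m * l)" using y d by (metis int_pow_pow)
    thus ?thesis using eq_or_pm_power_adj_int_pow[OF d, of "m * l"] \<open>m \<noteq> 0\<close> assms by auto
  next
    fix m :: int assume "m \<noteq> 0" "d = (y [^] k) [^] m"
    hence "d = y [^] (k * m)" using y by (simp add: int_pow_pow)
    hence "d = y \<or> pm_power_adj G d y"
      using eq_or_pm_power_adj_int_pow[OF y, of "k * m"] \<open>m \<noteq> 0\<close> assms pm_power_adj_sym
      by (metis mult_eq_0_iff)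
    thus ?thesis by blast
  qed
qed

end

definition cyclic_pair :: "('a, 'b) monoid_scheme \<Rightarrow> 'a \<Rightarrow> 'a \<Rightarrow> bool" where
  "cyclic_pair G x y \<longleftrightarrow>
     (\<exists>z\<in>carrier G. \<exists>a::int. \<exists>b::int. x = z [^]\<^bsub>G\<^esub> a \<and> y = z [^]\<^bsub>G\<^esub> b)"

definition locally_cyclic :: "('a, 'b) monoid_scheme \<Rightarrow> bool" where
  "locally_cyclic G \<longleftrightarrow> (\<forall>x\<in>carrier G. \<forall>y\<in>carrier G. cyclic_pair G x y)"

definition divisible :: "('a, 'b) monoid_scheme \<Rightarrow> bool" where
  "divisible G \<longleftrightarrow> (\<forall>x\<in>carrier G. \<forall>n::int. n > 0 \<longrightarrow> (\<exists>y\<in>carrier G. y [^]\<^bsub>G\<^esub> n = x))"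

lemma (in group) cyclic_pairI: "z \<in> carrier G \<Longrightarrow> cyclic_pair G (z [^] (a::int)) (z [^] (b::int))"
  unfolding cyclic_pair_def by blast

lemma (in group) cyclic_pair_if_pm_power_adj:
  assumes "pm_power_adj G x y"
  shows "cyclic_pair G x y"
  using pm_power_adj_cases[OF assms] pm_power_adj_carrier[OF assms]
    cyclic_pairI[of x 1] cyclic_pairI[of y _ 1] by auto

lemma (in group) divisible_root:
  assumes "divisible G" "x \<in> carrier G" "(n::int) \<noteq> 0"
  shows "\<exists>y\<in>carrier G. y [^] n = x"
proof (cases "n > 0")
  case True thus ?thesis using assms unfolding divisible_def by blast
next
  case False
  then obtain y where y: "y \<in> carrier G" "y [^] (- n) = x" using assms unfolding divisible_def by force
  hence "inv y [^] n = x" by (simp add: int_pow_inv int_pow_neg)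
  thus ?thesis using y by blast
qed

lemma (in group) divisible_if_prime_roots:
  assumes prime_root: "\<And>x p. x \<in> carrier G \<Longrightarrow> prime (p::int) \<Longrightarrow> \<exists>y\<in>carrier G. y [^] p = x"
  shows "divisible G"
proof -
  have root: "\<exists>y\<in>carrier G. y [^] int n = x" if "x \<in> carrier G" "n \<ge> 1" for n x
    using that
  proof (induction n arbitrary: x rule: less_induct)
    case (less n)
    show ?case
    proof (cases "n = 1")
      case True thus ?thesis using less.prems by (intro bexI[of _ x]) auto
    next
      case False
      then obtain p :: nat where p: "prime p" "p dvd n" using prime_factor_nat by blast
      then obtain m where n: "n = p * m" by blast
      have "m \<ge> 1" using less.prems(2) n by (cases m) auto
      moreover have "m < n" using n prime_gt_1_nat[OF p(1)] \<open>m \<ge> 1\<close> by simp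
      moreover obtain y where y: "y \<in> carrier G" "y [^] int p = x"
        using prime_root[OF less.prems(1), of "int p"] p(1) by auto
      ultimately obtain z where z: "z \<in> carrier G" "z [^] int m = y" using less.IH by blast
      hence "z [^] int n = x" using y n int_pow_pow[OF z(1), of "int m" "int p"]
        by (simp add: mult.commute)
      thus ?thesis using z by blast
    qed
  qed
  show ?thesis unfolding divisible_def
  proof (intro ballI allI impI)
    fix x and n :: int assume "x \<in> carrier G" "n > 0"
    thus "\<exists>y\<in>carrier G. y [^] n = x" using root[of x "nat n"] by simp
  qed
qed

section \<open>Power graphs of torsion-free groups\<close>

locale torsion_free_group = group +
  assumes torsion_free: "\<And>x n. x \<in> carrier G \<Longrightarrow> (n::int) \<noteq> 0 \<Longrightarrow> x [^] n = \<one> \<Longrightarrow> x = \<one>"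
begin

abbreviation "E \<equiv> pm_power_adj G"
abbreviation "V \<equiv> carrier G"

lemma int_pow_inj: "x \<in> V \<Longrightarrow> x \<noteq> \<one> \<Longrightarrow> x [^] (i::int) = x [^] (j::int) \<Longrightarrow> i = j"
  using torsion_free[of x "i - j"] by (auto simp: int_pow_diff)

lemma int_pow_ne_one: "x \<in> V \<Longrightarrow> x \<noteq> \<one> \<Longrightarrow> (i::int) \<noteq> 0 \<Longrightarrow> x [^] i \<noteq> \<one>"
  using torsion_free by blast

lemma locally_cyclic_int_pow_inj:
  assumes "locally_cyclic G" and yz: "y \<in> V" "z \<in> V" "(n::int) \<noteq> 0" "y [^] n = z [^] n"
  shows "y = z"
proof -
  obtain h a b where h: "h \<in> V" "y = h [^] (a::int)" "z = h [^] (b::int)"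
    using assms(1) yz(1,2) unfolding locally_cyclic_def cyclic_pair_def by blast
  show "y = z"
  proof (cases "h = \<one>")
    case False
    have "h [^] (a * n) = h [^] (b * n)" using h yz(4) by (simp add: int_pow_pow)
    thus ?thesis using int_pow_inj[OF h(1) False, of "a * n" "b * n"] yz(3) h by simp
  qed (use h in simp)
qed

lemma adj_ne_one: "E a b \<Longrightarrow> a \<noteq> \<one> \<and> b \<noteq> \<one>"
  unfolding pm_power_adj_def by (auto dest: torsion_free)

lemma adj_int_pow_iff:
  fixes i j :: int
  assumes x: "x \<in> V" "x \<noteq> \<one>" and "i \<noteq> 0" "j \<noteq> 0"
  shows "E (x [^] i) (x [^] j) \<longleftrightarrow> i \<noteq> j \<and> (i dvd j \<or> j dvd i)"
proof -
  have pow: "x [^] j = (x [^] i) [^] k \<longleftrightarrow> j = i * k" "x [^] i = (x [^] j) [^] k \<longleftrightarrow> i = j * k"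
    for k :: int
    using int_pow_inj[OF x] x by (auto simp: int_pow_pow)
  have "(\<exists>k::int. k \<noteq> 0 \<and> x [^] j = (x [^] i) [^] k) \<longleftrightarrow> i dvd j"
    using pow(1) assms(4) by (auto simp: dvd_def)
  moreover have "(\<exists>k::int. k \<noteq> 0 \<and> x [^] i = (x [^] j) [^] k) \<longleftrightarrow> j dvd i"
    using pow(2) assms(3) by (auto simp: dvd_def)
  moreover have "x [^] i = x [^] j \<longleftrightarrow> i = j" using int_pow_inj[OF x] by blast
  ultimately show ?thesis unfolding pm_power_adj_def using x by auto
qed

lemma adj_int_pow_self_iff:
  "x \<in> V \<Longrightarrow> x \<noteq> \<one> \<Longrightarrow> (i::int) \<noteq> 0 \<Longrightarrow> E (x [^] i) x \<longleftrightarrow> i \<noteq> 1"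
  using adj_int_pow_iff[of x i 1] by simp

lemma adj_prime_int_pow: "x \<in> V \<Longrightarrow> x \<noteq> \<one> \<Longrightarrow> prime (r::int) \<Longrightarrow> E (x [^] r) x"
  using adj_int_pow_self_iff[of x r] by (auto simp: prime_gt_0_int)

lemma prime_int_pow_not_adj:
  fixes r m :: int
  assumes x: "x \<in> V" "x \<noteq> \<one>" and "prime r" "\<bar>m\<bar> < r" "\<bar>m\<bar> \<ge> 2"
  shows "x [^] r \<noteq> x [^] m \<and> \<not> E (x [^] r) (x [^] m)"
  using prime_not_dvd_small[of r m] adj_int_pow_iff[OF x, of r m] int_pow_inj[OF x, of r m] assms
  by (auto simp: prime_gt_0_int)

lemma not_closed_twins_int_pow:
  fixes n :: int
  assumes x: "x \<in> V" "x \<noteq> \<one>" and "\<bar>n\<bar> \<ge> 2"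
  shows "\<not> closed_twins V E x (x [^] n)"
proof
  assume "closed_twins V E x (x [^] n)"
  moreover obtain r :: int where r: "prime r" "r > \<bar>n\<bar>" using ex_prime_gt by blast
  ultimately have "x [^] r = x [^] n \<or> E (x [^] r) (x [^] n)"
    using adj_prime_int_pow[OF x r(1)] x unfolding closed_twins_def by blast
  thus False using prime_int_pow_not_adj[OF x r(1)] r assms by auto
qed

lemma adj_not_twins_cases:
  assumes "E a b" "\<not> closed_twins V E a b"
  obtains n :: int where "\<bar>n\<bar> \<ge> 2" "b = a [^] n"
    | n :: int where "\<bar>n\<bar> \<ge> 2" "a = b [^] n"
proof -
  have V: "a \<in> V" "b \<in> V" using pm_power_adj_carrier[OF assms(1)] by auto
  have "a \<noteq> b" using assms(1) unfolding pm_power_adj_def by blast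
  moreover have "b \<noteq> inv a" using assms(2) closed_twins_inv[OF V(1)] by blast
  moreover have "a \<noteq> inv b" using assms(2) closed_twins_inv[OF V(2)] closed_twins_sym by metis
  ultimately have ne: "a \<noteq> b" "b \<noteq> inv a" "a \<noteq> inv b" by blast+
  have big: "\<bar>n\<bar> \<ge> 2" if "n \<noteq> 0" "x \<in> V" "x [^] n \<noteq> x" "x [^] n \<noteq> inv x" for x and n :: int
  proof -
    have "n \<noteq> 1" "n \<noteq> -1" using that by (auto simp: int_pow_neg)
    thus ?thesis using that(1) by linarith
  qed
  from pm_power_adj_cases[OF assms(1)] show ?thesis
  proof (elim disjE exE conjE)
    fix n :: int assume "n \<noteq> 0" "b = a [^] n"
    thus ?thesis using that(1) big[of n a] V ne by auto
  next
    fix n :: int assume "n \<noteq> 0" "a = b [^] n"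
    thus ?thesis using that(2) big[of n b] V ne by auto
  qed
qed

lemma not_nbhd_covered_int_pows:
  fixes k l :: int
  assumes c: "c \<in> V" "c \<noteq> \<one>" and "\<bar>k\<bar> \<ge> 2" "\<bar>l\<bar> \<ge> 2"
  shows "\<not> nbhd_covered V E c (c [^] k) (c [^] l)"
proof
  assume "nbhd_covered V E c (c [^] k) (c [^] l)"
  moreover obtain r :: int where r: "prime r" "r > \<bar>k\<bar> + \<bar>l\<bar>" using ex_prime_gt by blast
  ultimately have "c [^] r = c [^] k \<or> c [^] r = c [^] l \<or> E (c [^] r) (c [^] k) \<or> E (c [^] r) (c [^] l)"
    using adj_prime_int_pow[OF c r(1)] c unfolding nbhd_covered_def by blast
  thus False
    using prime_int_pow_not_adj[OF c r(1), of k] prime_int_pow_not_adj[OF c r(1), of l] r assms by auto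
qed

lemma infinite_common_nbrs_not_adj_int_pow:
  fixes n j :: int
  assumes x: "x \<in> V" "x \<noteq> \<one>" and n: "n \<noteq> 0" and j: "\<bar>j\<bar> \<ge> 2"
  shows "infinite {d\<in>V. E d (x [^] n) \<and> E d x \<and> d \<noteq> x [^] (n * j) \<and> \<not> E d (x [^] (n * j))}"
proof
  define a where "a = x [^] n"
  have a: "a \<in> V" "a \<noteq> \<one>" using x n int_pow_ne_one by (auto simp: a_def)
  have aj: "x [^] (n * j) = a [^] j" using x by (simp add: a_def int_pow_pow)
  assume fin: "finite {d\<in>V. E d (x [^] n) \<and> E d x \<and> d \<noteq> x [^] (n * j) \<and> \<not> E d (x [^] (n * j))}"
  have sub: "(\<lambda>r. a [^] r) ` {r. prime r \<and> r > \<bar>j\<bar>} \<subseteq>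
      {d\<in>V. E d (x [^] n) \<and> E d x \<and> d \<noteq> x [^] (n * j) \<and> \<not> E d (x [^] (n * j))}"
  proof safe
    fix r :: int assume r: "prime r" "r > \<bar>j\<bar>"
    have "n * r \<noteq> 0" "n * r \<noteq> 1" using n prime_ge_2_int[OF r(1)] by (auto simp: zmult_eq_1_iff)
    hence "E (x [^] (n * r)) x" using adj_int_pow_self_iff[OF x] by blast
    moreover have "x [^] (n * r) = a [^] r" using x by (simp add: a_def int_pow_pow)
    ultimately show "E (a [^] r) x" by simp
    show "a [^] r \<in> V" "E (a [^] r) (x [^] n)" using a adj_prime_int_pow[OF a r(1)] by (auto simp: a_def)
    show "a [^] r = x [^] (n * j) \<Longrightarrow> False" "E (a [^] r) (x [^] (n * j)) \<Longrightarrow> False"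
      using prime_int_pow_not_adj[OF a r(1)] r j aj by auto
  qed
  have "inj_on (\<lambda>r. a [^] r) {r. prime r \<and> r > \<bar>j\<bar>}"
    using int_pow_inj[OF a] by (auto simp: inj_on_def)
  moreover have "finite ((\<lambda>r. a [^] r) ` {r. prime r \<and> r > \<bar>j\<bar>})"
    by (rule finite_subset[OF sub fin])
  ultimately have "finite {r::int. prime r \<and> r > \<bar>j\<bar>}" using finite_image_iff by blast
  thus False using infinite_primes_gt by blast
qed

lemma finite_common_nbrs_not_adj_int_pow:
  fixes s t :: int
  assumes x: "x \<in> V" "x \<noteq> \<one>" and "s \<noteq> 0" "t \<noteq> 0"
  shows "finite {d\<in>V. E d (x [^] (s * t)) \<and> E d x \<and> d \<noteq> x [^] s \<and> \<not> E d (x [^] s)}"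
proof (rule finite_subset)
  show "finite ((\<lambda>i. x [^] i) ` {i. i dvd s * t})" using assms by simp
  show "{d\<in>V. E d (x [^] (s * t)) \<and> E d x \<and> d \<noteq> x [^] s \<and> \<not> E d (x [^] s)} \<subseteq>
      (\<lambda>i. x [^] i) ` {i. i dvd s * t}"
  proof safe
    fix d assume d: "d \<in> V" and Eda: "E d (x [^] (s * t))" and Edx: "E d x"
      and ne: "d \<noteq> x [^] s" and not_adj: "\<not> E d (x [^] s)"
    have nbr: "\<not> (\<exists>k::int. k \<noteq> 0 \<and> x [^] s = d [^] k)"
      "\<not> (\<exists>k::int. k \<noteq> 0 \<and> d = (x [^] s) [^] k)"
      using ne not_adj x d unfolding pm_power_adj_def by auto
    show "d \<in> (\<lambda>i. x [^] i) ` {i. i dvd s * t}"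
    using pm_power_adj_cases[OF Edx]
    proof (elim disjE exE conjE)
      fix k :: int assume "k \<noteq> 0" "x = d [^] k"
      hence "x [^] s = d [^] (k * s)" using d by (simp add: int_pow_pow)
      moreover have "k * s \<noteq> 0" using \<open>k \<noteq> 0\<close> assms(3) by simp
      ultimately show ?thesis using nbr(1) by blast
    next
      fix i :: int assume i: "d = x [^] i"
      from pm_power_adj_cases[OF Eda] show ?thesis
      proof (elim disjE exE conjE)
        fix m :: int assume "m \<noteq> 0" "x [^] (s * t) = d [^] m"
        hence "s * t = i * m" using int_pow_inj[OF x] i x by (simp add: int_pow_pow)
        thus ?thesis using i by auto
      next
        fix m :: int assume "m \<noteq> 0" "d = (x [^] (s * t)) [^] m"
        hence "d = (x [^] s) [^] (t * m)" using x by (simp add: int_pow_pow mult.assoc)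
        moreover have "t * m \<noteq> 0" using \<open>m \<noteq> 0\<close> assms(4) by simp
        ultimately show ?thesis using nbr(2) by blast
      qed
    qed
  qed
qed

lemma prime_edge_int_pow:
  assumes x: "x \<in> V" "x \<noteq> \<one>" and p: "prime (p::int)"
  shows "prime_edge V E (x [^] p) x"
proof -
  have p2: "\<bar>p\<bar> \<ge> 2" "p \<noteq> 0" using prime_ge_2_int[OF p] by auto
  have "\<not> between V E c (x [^] p) x" if "c \<in> V" for c
  proof
    assume "between V E c (x [^] p) x"
    hence Eca: "E c (x [^] p)" "\<not> closed_twins V E c (x [^] p)"
      and Ecx: "E c x" "\<not> closed_twins V E c x"
      and cov: "nbhd_covered V E c (x [^] p) x"
      and fin: "finite {d\<in>V. E d (x [^] p) \<and> E d x \<and> d \<noteq> c \<and> \<not> E d c}"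
      unfolding between_def by auto
    have c: "c \<in> V" "c \<noteq> \<one>" using that adj_ne_one Eca by auto
    show False
    proof (cases rule: adj_not_twins_cases[OF Eca])
      case (1 l)
      show False
      proof (cases rule: adj_not_twins_cases[OF Ecx])
        case (1 k)
        thus False using not_nbhd_covered_int_pows[OF c 1(1) \<open>\<bar>l\<bar> \<ge> 2\<close>] cov \<open>x [^] p = c [^] l\<close>
          by (simp add: nbhd_covered_sym)
      next
        case (2 i)
        hence "x [^] p = x [^] (i * l)" using \<open>x [^] p = c [^] l\<close> x by (simp add: int_pow_pow)
        hence "p = i * l" using int_pow_inj[OF x] by blast
        hence "\<bar>i\<bar> = 1 \<or> \<bar>l\<bar> = 1" using prime_int_product_abs p by blast
        thus False using 2(1) \<open>\<bar>l\<bar> \<ge> 2\<close> by linarith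
      qed
    next
      case (2 j)
      hence "c = x [^] (p * j)" using x by (simp add: int_pow_pow)
      thus False using infinite_common_nbrs_not_adj_int_pow[OF x p2(2) 2(1)] fin by simp
    qed
  qed
  moreover have "E (x [^] p) x" using adj_prime_int_pow[OF x p] .
  moreover have "\<not> closed_twins V E (x [^] p) x"
    using not_closed_twins_int_pow[OF x p2(1)] closed_twins_sym by metis
  ultimately show ?thesis unfolding prime_edge_def by blast
qed

lemma between_int_pow:
  fixes s t :: int
  assumes x: "x \<in> V" "x \<noteq> \<one>" and s: "\<bar>s\<bar> \<ge> 2" and t: "\<bar>t\<bar> \<ge> 2"
  shows "between V E (x [^] s) (x [^] (s * t)) x"
proof -
  have c: "x [^] s \<in> V" "x [^] s \<noteq> \<one>" using x s int_pow_ne_one by auto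
  have st: "s \<noteq> 0" "t \<noteq> 0" "s \<noteq> s * t" using s t by auto
  have pow: "x [^] (s * t) = (x [^] s) [^] t" using x by (simp add: int_pow_pow)
  have "E (x [^] s) (x [^] (s * t))" using adj_int_pow_iff[OF x] st by simp
  moreover have "E (x [^] s) x" using adj_int_pow_self_iff[OF x st(1)] s by auto
  moreover have "\<not> closed_twins V E (x [^] s) (x [^] (s * t))"
    using not_closed_twins_int_pow[OF c t] pow by simp
  moreover have "\<not> closed_twins V E (x [^] s) x"
    using not_closed_twins_int_pow[OF x s] closed_twins_sym by metis
  moreover have "nbhd_covered V E (x [^] s) (x [^] (s * t)) x"
    using nbhd_covered_int_pow_chain[OF x(1) st(1,2)] .
  moreover have "finite {d\<in>V. E d (x [^] (s * t)) \<and> E d x \<and> d \<noteq> x [^] s \<and> \<not> E d (x [^] s)}"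
    using finite_common_nbrs_not_adj_int_pow[OF x st(1,2)] .
  ultimately show ?thesis unfolding between_def by blast
qed

lemma prime_of_prime_edge:
  fixes n :: int
  assumes x: "x \<in> V" "x \<noteq> \<one>" and "\<bar>n\<bar> \<ge> 2" and "prime_edge V E (x [^] n) x"
  shows "prime \<bar>n\<bar>"
proof (rule ccontr)
  assume "\<not> prime \<bar>n\<bar>"
  then obtain s t where "n = s * t" "s \<ge> 2" "\<bar>t\<bar> \<ge> 2" using nonprime_int_factor assms(3) by blast
  hence "between V E (x [^] s) (x [^] n) x" using between_int_pow[OF x] by simp
  thus False using assms(4) x unfolding prime_edge_def by auto
qed

lemma root_chains_prime_square:
  fixes n :: int
  assumes y: "y \<in> V" "y \<noteq> \<one>" and p: "prime \<bar>n\<bar>"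
  shows "root_chain V E (y [^] n) y" and "root_chain V E (y [^] n) (y [^] (n * n))"
proof -
  define z where "z = y [^] n"
  define w where "w = y [^] (n * n)"
  have n2: "\<bar>n\<bar> \<ge> 2" using prime_ge_2_int[OF p] by simp
  hence n0: "n \<noteq> 0" "n \<noteq> 1" "n * n \<noteq> 0" "n * n \<noteq> n" "n * n \<noteq> 1"
    by (auto simp: zmult_eq_1_iff)
  have z: "z \<in> V" "z \<noteq> \<one>" using z_def y int_pow_ne_one n0 by auto
  have wz: "w = z [^] n" using w_def z_def y by (simp add: int_pow_pow)
  have Eyz: "E y z" using adj_int_pow_self_iff[OF y n0(1)] n0 z_def by (simp add: pm_power_adj_sym)
  have Ewz: "E w z" using adj_int_pow_iff[OF y n0(3) n0(1)] n0 z_def w_def by auto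
  have Eyw: "E y w" using adj_int_pow_self_iff[OF y n0(3)] n0 w_def by (simp add: pm_power_adj_sym)
  have Tyz: "\<not> closed_twins V E y z" using not_closed_twins_int_pow[OF y n2] z_def by simp
  have Twz: "\<not> closed_twins V E w z"
    using not_closed_twins_int_pow[OF z n2] wz closed_twins_sym by metis
  have cov: "nbhd_covered V E z w y"
    using nbhd_covered_int_pow_chain[OF y(1) n0(1) n0(1)] z_def w_def by simp
  have common: "c = z \<or> E c z" if c: "c \<in> V" "E c y" "E c w" for c
    using pm_power_adj_cases[OF c(2)]
  proof (elim disjE exE conjE)
    fix k :: int assume "k \<noteq> 0" "y = c [^] k"
    hence "z = c [^] (k * n)" using z_def c by (simp add: int_pow_pow)
    thus ?thesis using eq_or_pm_power_adj_int_pow[OF c(1), of "k * n"] \<open>k \<noteq> 0\<close> n0 by auto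
  next
    fix j :: int assume j: "j \<noteq> 0" "c = y [^] j"
    hence "j dvd n * n \<or> n * n dvd j" using c adj_int_pow_iff[OF y j(1) n0(3)] w_def by auto
    thus ?thesis
    proof
      assume "n * n dvd j"
      then obtain m where m: "j = n * n * m" by blast
      hence "c = z [^] (n * m)" using j z_def y by (simp add: int_pow_pow mult.assoc)
      moreover have "z = z [^] (n * m) \<or> E z (z [^] (n * m))"
        using eq_or_pm_power_adj_int_pow[OF z(1), of "n * m"] m j by simp
      ultimately show ?thesis using pm_power_adj_sym by metis
    next
      assume "j dvd n * n"
      hence "j dvd n \<or> n dvd j" using dvd_prime_square[OF p] by blast
      thus ?thesis using adj_int_pow_iff[OF y j(1) n0(1)] j z_def by auto
    qed
  qed
  have Ewy: "E w y" using Eyw pm_power_adj_sym by metis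
  show "root_chain V E z y"
    unfolding root_chain_def using Ewz Ewy Twz cov common w_def y(1)
    by (intro bexI[of _ w]) (auto simp: nbhd_covered_sym)
  show "root_chain V E z w"
    unfolding root_chain_def using Eyz Eyw Tyz cov common y(1)
    by (intro bexI[of _ y]) auto
qed

lemma root_chain_of_prime_edge:
  assumes div: "divisible G" and pe: "prime_edge V E a x"
  shows "root_chain V E x a"
proof -
  have Eax: "E a x" "\<not> closed_twins V E a x" using pe unfolding prime_edge_def by auto
  have a: "a \<in> V" "a \<noteq> \<one>" and x: "x \<in> V" "x \<noteq> \<one>"
    using pm_power_adj_carrier[OF Eax(1)] adj_ne_one[OF Eax(1)] by auto
  show ?thesis
  proof (cases rule: adj_not_twins_cases[OF Eax])
    case (1 n)
    have "prime_edge V E x a" using pe prime_edge_sym[of E, OF pm_power_adj_sym] by blast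
    hence "prime \<bar>n\<bar>" using prime_of_prime_edge[OF a 1(1)] 1(2) by simp
    thus ?thesis using root_chains_prime_square(1)[OF a] 1(2) by simp
  next
    case (2 n)
    hence p: "prime \<bar>n\<bar>" using prime_of_prime_edge[OF x 2(1)] pe by simp
    have "n \<noteq> 0" using 2(1) by auto
    then obtain y where y: "y \<in> V" "y [^] n = x" using divisible_root[OF div x(1)] by blast
    hence "y \<noteq> \<one>" using x by auto
    moreover have "a = y [^] (n * n)" using 2(2) y int_pow_pow[OF y(1), of n n] by simp
    ultimately show ?thesis using root_chains_prime_square(2)[OF y(1) _ p] y by simp
  qed
qed

lemma root_of_root_chain:
  fixes p :: int
  assumes x: "x \<in> V" "x \<noteq> \<one>" and p: "prime p" and rc: "root_chain V E x (x [^] p)"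
  shows "\<exists>y\<in>V. y [^] p = x"
proof -
  have p2: "p \<ge> 2" using prime_ge_2_int[OF p] .
  obtain a' where a': "a' \<in> V" and Ea'x: "E a' x" "\<not> closed_twins V E a' x"
    and cov: "nbhd_covered V E x (x [^] p) a'"
    and common: "\<forall>c\<in>V. E c (x [^] p) \<and> E c a' \<longrightarrow> c = x \<or> E c x"
    using rc unfolding root_chain_def by blast
  have a'1: "a' \<noteq> \<one>" using adj_ne_one Ea'x(1) by blast
  show ?thesis
  proof (cases rule: adj_not_twins_cases[OF Ea'x])
    case (1 k)
    have "k * p \<noteq> p" "k * p \<noteq> 0" using 1(1) p2 by auto
    hence "E (a' [^] p) (a' [^] (k * p))" using adj_int_pow_iff[OF a' a'1] p2 by auto
    moreover have "a' [^] (k * p) = x [^] p" using 1(2) a' by (simp add: int_pow_pow)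
    ultimately have "a' [^] p = x \<or> E (a' [^] p) x"
      using common adj_prime_int_pow[OF a' a'1 p] a' by auto
    hence "a' [^] p = x \<or> p dvd k \<or> k dvd p"
      using adj_int_pow_iff[OF a' a'1, of p k] 1 p2 by auto
    moreover have "\<exists>y\<in>V. y [^] p = x" if pk: "p dvd k"
    proof -
      obtain m where "k = p * m" using pk by blast
      hence "(a' [^] m) [^] p = x" using 1(2) a' by (simp add: int_pow_pow mult.commute)
      thus ?thesis using a' by blast
    qed
    moreover have "\<exists>y\<in>V. y [^] p = x" if kp: "k dvd p"
    proof -
      have "k = p \<or> k = - p" using prime_int_divisor_abs[OF p kp] 1(1) p2 by auto
      hence "a' [^] p = x \<or> inv a' [^] p = x" using 1(2) a' by (auto simp: int_pow_neg int_pow_inv)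
      thus ?thesis using a' by blast
    qed
    ultimately show ?thesis using a' by blast
  next
    case (2 j)
    thus ?thesis using not_nbhd_covered_int_pows[OF x, of p j] cov p2 by auto
  qed
qed

text \<open>The Bezout combination \<open>e = s i + t j\<close> makes \<open>z\<^sup>e\<close> a power of every common root of
  \<open>z\<^sup>i\<close> and \<open>z\<^sup>j\<close>; the other common neighbours are powers \<open>z\<^sup>m\<close> with \<open>e\<close> dividing \<open>m\<close>.\<close>

lemma dominating_common_nbr_int_pow:
  fixes i j e s t :: int
  assumes z: "z \<in> V" "z \<noteq> \<one>" and ij: "\<not> i dvd j" "\<not> j dvd i"
    and e: "e \<noteq> 0" "e \<noteq> i" "e \<noteq> j" "e dvd i \<or> i dvd e" "e dvd j \<or> j dvd e"
    and cm: "\<And>m. i dvd m \<Longrightarrow> j dvd m \<Longrightarrow> e dvd m"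
    and comb: "e = s * i + t * j"
  shows "dominating_common_nbr V E (z [^] i) (z [^] j) (z [^] e)"
proof -
  have ij0: "i \<noteq> 0" "j \<noteq> 0" using ij by auto
  have "E (z [^] e) c" if c: "c \<in> V" "E c (z [^] i)" "E c (z [^] j)" "c \<noteq> z [^] e" for c
  proof (cases "\<exists>(k::int) (k'::int). z [^] i = c [^] k \<and> z [^] j = c [^] k'")
    case True
    then obtain k k' :: int where k: "z [^] i = c [^] k" "z [^] j = c [^] k'" by blast
    have "z [^] e = (z [^] i) [^] s \<otimes> (z [^] j) [^] t"
      using z comb by (simp add: int_pow_pow int_pow_mult mult.commute)
    also have "\<dots> = c [^] (k * s + k' * t)" using k c by (simp add: int_pow_pow int_pow_mult)
    finally have ce: "z [^] e = c [^] (k * s + k' * t)" .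
    hence "k * s + k' * t \<noteq> 0" using int_pow_ne_one[OF z e(1)] by auto
    thus ?thesis using pm_power_adj_int_pow[OF c(1)] ce c(4) pm_power_adj_sym by metis
  next
    case False
    have "\<exists>m. c = z [^] m \<and> i dvd m" using pm_power_adj_cases[OF c(2)]
    proof (elim disjE exE conjE)
      fix k :: int assume "c = (z [^] i) [^] k"
      thus ?thesis using z by (intro exI[of _ "i * k"]) (simp add: int_pow_pow)
    next
      fix k :: int assume k: "z [^] i = c [^] k"
      from pm_power_adj_cases[OF c(3)] show ?thesis
      proof (elim disjE exE conjE)
        fix k' :: int assume "c = (z [^] j) [^] k'"
        hence "z [^] i = z [^] (j * (k' * k))" using k z by (simp add: int_pow_pow mult.assoc)
        hence "j dvd i" using int_pow_inj[OF z] by (metis dvd_triv_left)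
        thus ?thesis using ij by blast
      qed (use False k in auto)
    qed
    moreover have "\<exists>m. c = z [^] m \<and> j dvd m" using pm_power_adj_cases[OF c(3)]
    proof (elim disjE exE conjE)
      fix k :: int assume "c = (z [^] j) [^] k"
      thus ?thesis using z by (intro exI[of _ "j * k"]) (simp add: int_pow_pow)
    next
      fix k :: int assume k: "z [^] j = c [^] k"
      from pm_power_adj_cases[OF c(2)] show ?thesis
      proof (elim disjE exE conjE)
        fix k' :: int assume "c = (z [^] i) [^] k'"
        hence "z [^] j = z [^] (i * (k' * k))" using k z by (simp add: int_pow_pow mult.assoc)
        hence "i dvd j" using int_pow_inj[OF z] by (metis dvd_triv_left)
        thus ?thesis using ij by blast
      qed (use False k in auto)
    qed
    ultimately obtain m where m: "c = z [^] m" "i dvd m" "j dvd m" using int_pow_inj[OF z] by metis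
    have "c \<noteq> \<one>" using adj_ne_one c(2) by blast
    hence "m \<noteq> 0" "e \<noteq> m" using m(1) c(4) by auto
    thus ?thesis using adj_int_pow_iff[OF z e(1)] cm[OF m(2,3)] m(1) by simp
  qed
  moreover have "E (z [^] e) (z [^] i)" "E (z [^] e) (z [^] j)"
    using adj_int_pow_iff[OF z e(1)] ij0 e by auto
  ultimately show ?thesis unfolding dominating_common_nbr_def by blast
qed

lemma three_dominating_common_nbrs_if_cyclic_pair:
  assumes "x \<noteq> \<one>" "y \<noteq> \<one>" "x \<noteq> y" "\<not> E x y" "cyclic_pair G x y"
  shows "has_three_dominating_common_nbrs V E x y"
proof -
  obtain z i j where zij: "z \<in> V" "x = z [^] (i::int)" "y = z [^] (j::int)"
    using assms(5) unfolding cyclic_pair_def by blast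
  have z: "z \<in> V" "z \<noteq> \<one>" using zij assms(1) by auto
  have ij0: "i \<noteq> 0" "j \<noteq> 0" using zij assms(1,2) by auto
  have ij: "\<not> i dvd j" "\<not> j dvd i"
    using adj_int_pow_iff[OF z ij0] zij assms(3,4) by auto
  define g where "g = gcd i j"
  define l where "l = lcm i j"
  have g: "g > 0" "g dvd i" "g dvd j" using ij0 by (auto simp: g_def)
  have "l \<noteq> 0" using ij0 by (simp add: l_def lcm_eq_0_iff)
  moreover have "0 \<le> l" by (simp add: l_def)
  ultimately have "l > 0" by linarith
  hence l: "l > 0" "i dvd l" "j dvd l" by (simp_all add: l_def)
  obtain s t where st: "s * i + t * j = g" using bezout_int g_def by blast
  have l_ne: "l \<noteq> i" "l \<noteq> j" using l ij by auto
  have l_dvd: "l dvd m" if "i dvd m" "j dvd m" for m using that by (simp add: l_def lcm_least)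
  obtain q where q: "l = q * i" using l(2) by (auto simp: dvd_def mult.commute)
  have g_ne: "g \<noteq> i" "g \<noteq> j" "- g \<noteq> i" "- g \<noteq> j" using g ij by auto
  have g_dvd: "g dvd m" if "i dvd m" for m using g(2) that by (rule dvd_trans)
  have "dominating_common_nbr V E x y (z [^] g)"
    by (unfold zij(2,3), rule dominating_common_nbr_int_pow[OF z ij, of g s t])
      (use g g_ne g_dvd st in auto)
  moreover have "dominating_common_nbr V E x y (z [^] (- g))"
    by (unfold zij(2,3), rule dominating_common_nbr_int_pow[OF z ij, of "- g" "- s" "- t"])
      (use g g_ne g_dvd st in auto)
  moreover have "dominating_common_nbr V E x y (z [^] l)"
    by (unfold zij(2,3), rule dominating_common_nbr_int_pow[OF z ij _ l_ne _ _ l_dvd, of q 0])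
      (use l q in auto)
  moreover have "g \<noteq> l" using g l ij by (metis dvd_trans)
  hence "g \<noteq> - g" "g \<noteq> l" "- g \<noteq> l" using g(1) l(1) by auto
  hence "z [^] g \<noteq> z [^] (- g)" "z [^] g \<noteq> z [^] l" "z [^] (- g) \<noteq> z [^] l"
    using int_pow_inj[OF z] by blast+
  ultimately show ?thesis unfolding has_three_dominating_common_nbrs_def using z(1) by blast
qed

lemma dominating_common_nbr_common_power:
  assumes nc: "\<not> cyclic_pair G x y" and u: "dominating_common_nbr V E x y u"
  obtains k l :: int where "k \<noteq> 0" "l \<noteq> 0" "u = x [^] k" "u = y [^] l"
proof -
  have Eux: "E u x" and Euy: "E u y" using u unfolding dominating_common_nbr_def by auto
  have V: "u \<in> V" "x \<in> V" "y \<in> V"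
    using pm_power_adj_carrier[OF Eux] pm_power_adj_carrier[OF Euy] by auto
  have "\<exists>k::int. k \<noteq> 0 \<and> u = x [^] k" using pm_power_adj_cases[OF Eux]
  proof (elim disjE exE conjE)
    fix k :: int assume x: "x = u [^] k"
    from pm_power_adj_cases[OF Euy] show ?thesis
    proof (elim disjE exE conjE)
      fix l :: int assume "y = u [^] l"
      thus ?thesis using nc x cyclic_pairI[OF V(1)] by blast
    next
      fix l :: int assume "u = y [^] l"
      hence "x = y [^] (l * k)" using x V by (simp add: int_pow_pow)
      thus ?thesis using nc cyclic_pairI[OF V(3), of "l * k" 1] V by simp
    qed
  qed blast
  moreover have "\<exists>l::int. l \<noteq> 0 \<and> u = y [^] l" using pm_power_adj_cases[OF Euy]
  proof (elim disjE exE conjE)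
    fix l :: int assume y: "y = u [^] l"
    from pm_power_adj_cases[OF Eux] show ?thesis
    proof (elim disjE exE conjE)
      fix k :: int assume "x = u [^] k"
      thus ?thesis using nc y cyclic_pairI[OF V(1)] by blast
    next
      fix k :: int assume "u = x [^] k"
      hence "y = x [^] (k * l)" using y V by (simp add: int_pow_pow)
      thus ?thesis using nc cyclic_pairI[OF V(2), of 1 "k * l"] V by simp
    qed
  qed blast
  ultimately show ?thesis using that by blast
qed

lemma abs_exponent_dominating_common_nbr_le:
  fixes ka la kb :: int
  assumes x: "x \<in> V" "x \<noteq> \<one>" and y: "y \<in> V" and nc: "\<not> cyclic_pair G x y"
    and Ua: "dominating_common_nbr V E x y (x [^] ka)"
    and Ub: "dominating_common_nbr V E x y (x [^] kb)"
    and ka: "ka \<noteq> 0" "la \<noteq> 0" "x [^] ka = y [^] la" and kb: "kb \<noteq> 0"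
  shows "\<bar>kb\<bar> \<le> \<bar>ka\<bar>"
proof (rule ccontr)
  assume lt: "\<not> \<bar>kb\<bar> \<le> \<bar>ka\<bar>"
  hence "x [^] ka \<noteq> x [^] kb" using int_pow_inj[OF x] by auto
  hence "E (x [^] kb) (x [^] ka)"
    using Ua Ub x unfolding dominating_common_nbr_def by auto
  moreover have "\<not> kb dvd ka" using dvd_imp_le_int[OF ka(1), of kb] lt by linarith
  ultimately have "ka dvd kb" using adj_int_pow_iff[OF x kb ka(1)] by blast
  then obtain t where t: "kb = ka * t" by blast
  have "\<bar>kb\<bar> = \<bar>ka\<bar> * \<bar>t\<bar>" using t by (simp add: abs_mult)
  hence t2: "\<bar>t\<bar> \<ge> 2" using lt t kb by (cases "\<bar>t\<bar> = 1") auto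
  obtain s :: int where s: "prime s" "s > \<bar>t\<bar>" using ex_prime_gt by blast
  have s2: "s \<ge> 2" using prime_ge_2_int[OF s(1)] .
  have ks: "ka * s \<noteq> 0" "ka * s \<noteq> 1" using ka(1) s2 by (auto simp: zmult_eq_1_iff)
  have xy: "x [^] (ka * s) = y [^] (la * s)" using ka(3) x y by (metis int_pow_pow)
  have "E (x [^] (ka * s)) x" using adj_int_pow_self_iff[OF x ks(1)] ks by simp
  moreover have "x [^] (ka * s) \<noteq> y" using nc cyclic_pairI[OF x(1), of 1 "ka * s"] x by auto
  hence "E y (x [^] (ka * s))"
    unfolding xy using pm_power_adj_int_pow[OF y, of "la * s"] ka(2) s2 by simp
  hence "E (x [^] (ka * s)) y" by (simp add: pm_power_adj_sym)
  moreover have "ka * s \<noteq> kb" using t ka(1) s(2) by auto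
  hence "x [^] (ka * s) \<noteq> x [^] kb" using int_pow_inj[OF x] by blast
  ultimately have "E (x [^] kb) (x [^] (ka * s))"
    using Ub x unfolding dominating_common_nbr_def by auto
  hence "kb dvd ka * s \<or> ka * s dvd kb" using adj_int_pow_iff[OF x kb ks(1)] by auto
  hence "t dvd s \<or> s dvd t" using t ka(1) by auto
  thus False using prime_not_dvd_small[OF s(1) t2 s(2)] by blast
qed

lemma not_three_dominating_common_nbrs_if_not_cyclic_pair:
  assumes x: "x \<in> V" and y: "y \<in> V" and nc: "\<not> cyclic_pair G x y"
  shows "\<not> has_three_dominating_common_nbrs V E x y"
proof
  assume "has_three_dominating_common_nbrs V E x y"
  then obtain u1 u2 u3 where u: "u1 \<noteq> u2" "u1 \<noteq> u3" "u2 \<noteq> u3"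
    and U: "dominating_common_nbr V E x y u1" "dominating_common_nbr V E x y u2"
      "dominating_common_nbr V E x y u3"
    unfolding has_three_dominating_common_nbrs_def by blast
  have x1: "x \<noteq> \<one>" using nc cyclic_pairI[OF y, of 0 1] y by auto
  obtain k1 l1 :: int where k1: "k1 \<noteq> 0" "l1 \<noteq> 0" "u1 = x [^] k1" "u1 = y [^] l1"
    using dominating_common_nbr_common_power[OF nc U(1)] .
  obtain k2 l2 :: int where k2: "k2 \<noteq> 0" "l2 \<noteq> 0" "u2 = x [^] k2" "u2 = y [^] l2"
    using dominating_common_nbr_common_power[OF nc U(2)] .
  obtain k3 l3 :: int where k3: "k3 \<noteq> 0" "l3 \<noteq> 0" "u3 = x [^] k3" "u3 = y [^] l3"
    using dominating_common_nbr_common_power[OF nc U(3)] .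
  note le = abs_exponent_dominating_common_nbr_le[OF x x1 y nc]
  note U' = U(1)[unfolded k1(3)] U(2)[unfolded k2(3)] U(3)[unfolded k3(3)]
  have "\<bar>k2\<bar> \<le> \<bar>k1\<bar>" by (rule le[OF U'(1) U'(2) k1(1,2) _ k2(1)]) (use k1 in simp)
  moreover have "\<bar>k1\<bar> \<le> \<bar>k2\<bar>" by (rule le[OF U'(2) U'(1) k2(1,2) _ k1(1)]) (use k2 in simp)
  moreover have "\<bar>k3\<bar> \<le> \<bar>k1\<bar>" by (rule le[OF U'(1) U'(3) k1(1,2) _ k3(1)]) (use k1 in simp)
  moreover have "\<bar>k1\<bar> \<le> \<bar>k3\<bar>" by (rule le[OF U'(3) U'(1) k3(1,2) _ k1(1)]) (use k3 in simp)
  moreover have "k1 \<noteq> k2" "k1 \<noteq> k3" "k2 \<noteq> k3" using u k1 k2 k3 by auto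
  ultimately show False by linarith
qed

end

lemma (in group) torsion_free_if_one_isolated:
  assumes "\<And>x. \<not> pm_power_adj G \<one> x"
  shows "torsion_free_group G"
proof
  fix x and n :: int assume x: "x \<in> carrier G" "n \<noteq> 0" "x [^] n = \<one>"
  show "x = \<one>"
  proof (rule ccontr)
    assume "x \<noteq> \<one>"
    hence "pm_power_adj G \<one> x" using x unfolding pm_power_adj_def by auto
    thus False using assms by blast
  qed
qed

lemma rat_add_group_simps [simp]:
  "carrier rat_add_group = UNIV" "monoid.mult rat_add_group x y = x + y" "one rat_add_group = 0"
  by (simp_all add: rat_add_group_def)

lemma group_rat_add_group: "group rat_add_group"
  by (rule groupI) (auto intro: exI[of _ "- _"])

lemma rat_add_group_int_pow: "x [^]\<^bsub>rat_add_group\<^esub> (n::int) = of_int n * x"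
proof -
  have inv: "inv\<^bsub>rat_add_group\<^esub> x = - x" for x
    by (rule group.inv_equality[OF group_rat_add_group]) auto
  have "x [^]\<^bsub>rat_add_group\<^esub> (n::nat) = of_nat n * x" for n
    by (induction n) (auto simp: algebra_simps)
  thus ?thesis by (auto simp: int_pow_def2 inv)
qed

interpretation rat_add_group: torsion_free_group rat_add_group
proof -
  interpret group rat_add_group by (rule group_rat_add_group)
  show "torsion_free_group rat_add_group" by unfold_locales (auto simp: rat_add_group_int_pow)
qed

lemma rat_add_group_zero_isolated: "\<not> pm_power_adj rat_add_group 0 y"
  unfolding pm_power_adj_def by (auto simp: rat_add_group_int_pow)

lemma divisible_rat_add_group: "divisible rat_add_group"
  unfolding divisible_def rat_add_group_int_pow
proof (intro ballI allI impI)
  fix x :: rat and n :: int assume "n > 0"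
  thus "\<exists>y\<in>carrier rat_add_group. of_int n * y = x" by (intro bexI[of _ "x / of_int n"]) auto
qed

lemma rat_int_quotient:
  fixes q :: rat
  obtains a b :: int where "b > 0" "q = of_int a / of_int b"
  using quotient_of_denom_pos quotient_of_div by (metis surj_pair)

lemma locally_cyclic_rat_add_group: "locally_cyclic rat_add_group"
  unfolding locally_cyclic_def cyclic_pair_def
proof (intro ballI)
  fix x y :: rat
  obtain a b c d :: int where b: "b > 0" "x = of_int a / of_int b" and d: "d > 0" "y = of_int c / of_int d"
    using rat_int_quotient by metis
  define z where "z = 1 / (of_int b * of_int d :: rat)"
  have "x = of_int (a * d) * z" "y = of_int (c * b) * z" using b d by (simp_all add: z_def field_simps)
  thus "\<exists>z\<in>carrier rat_add_group. \<exists>a::int. \<exists>b::int.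
      x = z [^]\<^bsub>rat_add_group\<^esub> a \<and> y = z [^]\<^bsub>rat_add_group\<^esub> b"
    by (intro bexI[of _ z] exI[of _ "a * d"] exI[of _ "c * b"]) (auto simp: rat_add_group_int_pow)
qed

section \<open>Torsion-free, divisible, locally cyclic groups\<close>

locale rat_like_group = torsion_free_group +
  fixes g
  assumes g: "g \<in> carrier G" "g \<noteq> \<one>"
    and locally_cyclic: "locally_cyclic G" and divisible: "divisible G"
begin

text \<open>Only used for \<open>n > 0\<close>, where divisibility and local cyclicity make the root unique.\<close>

definition g_root :: "int \<Rightarrow> 'a" where
  "g_root n = (THE y. y \<in> V \<and> y [^] n = g)"

lemma g_root: assumes "n > 0" shows "g_root n \<in> V" "g_root n [^] n = g"
proof -
  have "n \<noteq> 0" using assms by simp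
  then obtain y where y: "y \<in> V" "y [^] n = g" using divisible_root[OF divisible g(1)] by blast
  hence "\<exists>!y. y \<in> V \<and> y [^] n = g" using locally_cyclic_int_pow_inj[OF locally_cyclic, of _ y n] assms by auto
  hence "g_root n \<in> V \<and> g_root n [^] n = g" unfolding g_root_def by (rule theI')
  thus "g_root n \<in> V" "g_root n [^] n = g" by auto
qed

lemma g_root_eqI: "n > 0 \<Longrightarrow> y \<in> V \<Longrightarrow> y [^] n = g \<Longrightarrow> g_root n = y"
  using locally_cyclic_int_pow_inj[OF locally_cyclic, of "g_root n" y n] g_root[of n] by auto

lemma g_root_ne_one: "n > 0 \<Longrightarrow> g_root n \<noteq> \<one>"
  using g_root(2)[of n] g(2) by force

lemma g_root_mult_pow: assumes "b > 0" "k > 0" shows "g_root (b * k) [^] k = g_root b"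
proof (rule sym, rule g_root_eqI[OF assms(1)])
  have "b * k > 0" using assms by simp
  thus "g_root (b * k) [^] k \<in> V" "(g_root (b * k) [^] k) [^] b = g"
    using g_root[of "b * k"] by (simp_all add: int_pow_pow mult.commute)
qed

definition embed :: "rat \<Rightarrow> 'a" where
  "embed q = g_root (snd (quotient_of q)) [^] fst (quotient_of q)"

lemma embed_closed: "embed q \<in> V"
  using g_root quotient_of_denom_pos' embed_def by simp

lemma embed_common_denom:
  assumes "b > 0" "d > 0"
  shows "embed (of_int a / of_int b) = g_root (b * d) [^] (a * d)"
proof -
  obtain c e where ce: "quotient_of (of_int a / of_int b) = (c, e)" by fastforce
  have e: "e > 0" using ce quotient_of_denom_pos by blast
  have "of_int a / of_int b = (of_int c / of_int e :: rat)" using ce quotient_of_div by blast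
  hence ad: "a * e = c * b" using assms(1) e by (simp add: field_simps flip: of_int_mult)
  have bde: "b * d * e > 0" using assms e by simp
  have "embed (of_int a / of_int b) = (g_root (b * d * e) [^] (b * d)) [^] c"
    using ce g_root_mult_pow[OF e, of "b * d"] assms by (simp add: embed_def mult.commute)
  also have "\<dots> = g_root (b * d * e) [^] (d * (c * b))"
    using g_root[OF bde] by (simp add: int_pow_pow algebra_simps)
  also have "d * (c * b) = e * (a * d)"
  proof -
    have "d * (c * b) = d * (a * e)" using ad by simp
    thus ?thesis by (simp add: ac_simps)
  qed
  also have "g_root (b * d * e) [^] (e * (a * d)) = (g_root (b * d * e) [^] e) [^] (a * d)"
    using g_root[OF bde] by (simp add: int_pow_pow)
  also have "\<dots> = g_root (b * d) [^] (a * d)"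
    using g_root_mult_pow[of "b * d" e] assms e by simp
  finally show ?thesis .
qed

lemma embed_add: "embed (q + r) = embed q \<otimes> embed r"
proof -
  obtain a b c d :: int where b: "b > 0" "q = of_int a / of_int b" and d: "d > 0" "r = of_int c / of_int d"
    using rat_int_quotient by metis
  have "q + r = of_int (a * d + c * b) / of_int (b * d)" using b d by (simp add: field_simps)
  hence "embed (q + r) = g_root (b * d * 1) [^] ((a * d + c * b) * 1)"
    using embed_common_denom[of "b * d" 1 "a * d + c * b"] b d by simp
  also have "\<dots> = g_root (b * d) [^] (a * d) \<otimes> g_root (d * b) [^] (c * b)"
    using g_root b d by (simp add: int_pow_mult mult.commute)
  finally show ?thesis
    using embed_common_denom[OF b(1) d(1)] embed_common_denom[OF d(1) b(1)] b d
    by (simp add: mult.commute)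
qed

lemma inj_embed: "inj embed"
proof (rule injI)
  fix q r :: rat assume eq: "embed q = embed r"
  obtain a b c d :: int where b: "b > 0" "q = of_int a / of_int b" and d: "d > 0" "r = of_int c / of_int d"
    using rat_int_quotient by metis
  have "g_root (b * d) [^] (a * d) = g_root (b * d) [^] (c * b)"
    using eq embed_common_denom[OF b(1) d(1)] embed_common_denom[OF d(1) b(1)] b d
    by (simp add: mult.commute)
  hence "a * d = c * b" using int_pow_inj g_root g_root_ne_one b d by (metis mult_pos_pos)
  hence "of_int a * of_int d = (of_int c * of_int b :: rat)" by (metis of_int_mult)
  thus "q = r" using b d by (simp add: frac_eq_eq)
qed

lemma embed_surj: "embed ` UNIV = V"
proof
  show "V \<subseteq> embed ` UNIV"
  proof
    fix w assume w: "w \<in> V"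
    obtain h a b where h: "h \<in> V" "g = h [^] (a::int)" "w = h [^] (b::int)"
      using locally_cyclic g(1) w unfolding locally_cyclic_def cyclic_pair_def by blast
    have "a \<noteq> 0" using h g by auto
    then obtain h' a' b' where h': "h' \<in> V" "a' > 0" "g = h' [^] (a'::int)" "w = h' [^] (b'::int)"
    proof (cases "a > 0")
      case False
      have "g = inv h [^] (- a)" "w = inv h [^] (- b)" using h by (simp_all add: int_pow_inv int_pow_neg)
      thus ?thesis using that[of "inv h" "- a" "- b"] h False \<open>a \<noteq> 0\<close> by simp
    qed (use h that in blast)
    hence "w = embed (of_int b' / of_int a')"
      using g_root_eqI embed_common_denom[of a' 1] by simp
    thus "w \<in> embed ` UNIV" by blast
  qed
qed (use embed_closed in blast)

lemma embed_iso: "embed \<in> iso rat_add_group G"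
  unfolding iso_def hom_def bij_betw_def using embed_closed embed_add inj_embed embed_surj by auto

end

section \<open>Groups with the power graph of the rationals\<close>

locale rat_power_graph_iso = group G +
  iso: graph_isomorphism "carrier G" "pm_power_adj G" "carrier rat_add_group"
    "pm_power_adj rat_add_group" f
  for G (structure) and f
begin

lemma f_one: "f \<one> = 0"
proof -
  obtain w where w: "w \<in> carrier G" "f w = 0" using iso.preimage_exists[of 0] by auto
  have "\<not> pm_power_adj G w x" for x
  proof
    assume adj: "pm_power_adj G w x"
    have x: "x \<in> carrier G" using pm_power_adj_carrier[OF adj] by blast
    hence "pm_power_adj rat_add_group 0 (f x)" using iso.adj_iff[OF w(1) x] adj w(2) by simp
    thus False using rat_add_group_zero_isolated by blast
  qed
  hence "w = \<one>" using pm_power_adj_square[OF w(1)] by blast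
  thus ?thesis using w(2) by simp
qed

lemma one_isolated: "\<not> pm_power_adj G \<one> x"
proof
  assume adj: "pm_power_adj G \<one> x"
  have x: "x \<in> carrier G" using pm_power_adj_carrier[OF adj] by blast
  hence "pm_power_adj rat_add_group 0 (f x)" using iso.adj_iff[OF one_closed x] adj f_one by simp
  thus False using rat_add_group_zero_isolated by blast
qed

sublocale torsion_free_group G
  by (rule torsion_free_if_one_isolated) (rule one_isolated)

lemma f_eq_zero_iff: "x \<in> V \<Longrightarrow> f x = 0 \<longleftrightarrow> x = \<one>"
  using iso.eq_iff[of x \<one>] f_one by auto

lemma locally_cyclic: "locally_cyclic G"
  unfolding locally_cyclic_def
proof (intro ballI)
  fix x y assume x: "x \<in> V" and y: "y \<in> V"
  show "cyclic_pair G x y"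
  proof (rule ccontr)
    assume nc: "\<not> cyclic_pair G x y"
    have "x \<noteq> \<one>" using nc cyclic_pairI[OF y, of 0 1] y by auto
    hence "f x \<noteq> \<one>\<^bsub>rat_add_group\<^esub>" using f_eq_zero_iff[OF x] by simp
    moreover have "y \<noteq> \<one>" using nc cyclic_pairI[OF x, of 1 0] x by auto
    hence "f y \<noteq> \<one>\<^bsub>rat_add_group\<^esub>" using f_eq_zero_iff[OF y] by simp
    moreover have "x \<noteq> y" using nc cyclic_pairI[OF x, of 1 1] x by auto
    hence "f x \<noteq> f y" using iso.eq_iff[OF x y] by simp
    moreover have "\<not> E x y" using nc cyclic_pair_if_pm_power_adj by blast
    hence "\<not> pm_power_adj rat_add_group (f x) (f y)" using iso.adj_iff[OF x y] by simp
    moreover have "cyclic_pair rat_add_group (f x) (f y)"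
      using locally_cyclic_rat_add_group unfolding locally_cyclic_def by simp
    ultimately have "has_three_dominating_common_nbrs
        (carrier rat_add_group) (pm_power_adj rat_add_group) (f x) (f y)"
      by (rule rat_add_group.three_dominating_common_nbrs_if_cyclic_pair)
    thus False
      using iso.has_three_dominating_common_nbrs_image[OF x y]
        not_three_dominating_common_nbrs_if_not_cyclic_pair[OF x y nc] by blast
  qed
qed

lemma prime_root: "x \<in> V \<Longrightarrow> prime (p::int) \<Longrightarrow> \<exists>y\<in>V. y [^] p = x"
proof (cases "x = \<one>")
  case False
  assume x: "x \<in> V" and p: "prime p"
  have "prime_edge V E (x [^] p) x" by (rule prime_edge_int_pow[OF x False p])
  hence "prime_edge (carrier rat_add_group) (pm_power_adj rat_add_group) (f (x [^] p)) (f x)"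
    using iso.prime_edge_image x by simp
  hence "root_chain (carrier rat_add_group) (pm_power_adj rat_add_group) (f x) (f (x [^] p))"
    by (rule rat_add_group.root_chain_of_prime_edge[OF divisible_rat_add_group])
  hence "root_chain V E x (x [^] p)" using iso.root_chain_image x by simp
  thus ?thesis by (rule root_of_root_chain[OF x False p])
qed (auto intro!: bexI[of _ \<one>])

lemma divisible: "divisible G"
  by (rule divisible_if_prime_roots) (rule prime_root)

lemma iso_rat_add_group: "G \<cong> rat_add_group"
proof -
  obtain g where g: "g \<in> V" "f g = 1" using iso.preimage_exists[of 1] by auto
  hence "g \<noteq> \<one>" using f_one by auto
  then interpret rat_like_group G g
    by unfold_locales (use g(1) locally_cyclic divisible in auto)
  have "rat_add_group \<cong> G" using embed_iso by (rule is_isoI)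
  thus ?thesis by (rule group.iso_sym[OF group_rat_add_group])
qed

end

theorem mainTheorem9:
  fixes G :: "('a, 'b) monoid_scheme"
  assumes "group G"
    and "pm_power_graph_iso G rat_add_group"
  shows "G \<cong> rat_add_group"
proof -
  obtain f where "graph_isomorphism (carrier G) (pm_power_adj G) (carrier rat_add_group)
      (pm_power_adj rat_add_group) f"
    using assms(2) unfolding pm_power_graph_iso_def graph_iso_def graph_isomorphism_def by blast
  then interpret rat_power_graph_iso G f by (intro rat_power_graph_iso.intro assms(1))
  show ?thesis by (rule iso_rat_add_group)
qed

end
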